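(* Let $p>1$ be an integer and let $u^{(p)}$ be the fixed point of the substitution $\varphi_p(L)=L^pS$, $\varphi_p(S)=M$, $\varphi_p(M)=L^{p-1}S$. Then (i) each occurrence of $S$ in $u^{(p)}$ is preceded by $L$ and followed either by $L$ or by $M$; (ii) each occurrence of $M$ in $u^{(p)}$ is preceded by $S$ and followed by $L$.
   Context: $u^{(p)}=\lim_{n\to\infty}\varphi_p^n(L)$ is the unique infinite word over $\{L,S,M\}$ with $\varphi_p(u^{(p)})=u^{(p)}$. *)

theory Defs
  imports Main
begin

datatype letter = L | S | M

fun phi :: "nat \<Rightarrow> letter \<Rightarrow> letter list" where
  "phi p L = replicate p L @ [S]"
| "phi p S = [M]"
| "phi p M = replicate (p - 1) L @ [S]"

definition phi_word :: "nat \<Rightarrow> letter list \<Rightarrow> letter list" where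
  "phi_word p w = concat (map (phi p) w)"

text \<open>The infinite word u^(p) = lim_{n\<rightarrow>\<infinity>} phi_p^n(L), as a function nat \<Rightarrow> letter:
  its n-th letter is the letter that the n-th position of phi_p^k(L) eventually
  (for all large k) carries.\<close>
definition u :: "nat \<Rightarrow> nat \<Rightarrow> letter" where
  "u p n = (THE c. \<exists>K. \<forall>k\<ge>K. n < length ((phi_word p ^^ k) [L]) \<and> (phi_word p ^^ k) [L] ! n = c)"

end

theory Submission
  imports Defs "HOL-Library.Sublist"
begin

text \<open>Call the two-letter words LL, LS, SL, SM, ML admissible. The morphism \<open>\<phi>\<^sub>p\<close> maps
  words all of whose factors of length two are admissible to words of the same kind: each
  image \<open>\<phi>\<^sub>p(a)\<close> is such a word, and at the junction of \<open>\<phi>\<^sub>p(a)\<phi>\<^sub>p(b)\<close> for an admissible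
  \<open>ab\<close> the last letter of \<open>\<phi>\<^sub>p(a)\<close> is S (or M, when \<open>a = S\<close> and hence \<open>b = L\<close>) while the
  first letter of \<open>\<phi>\<^sub>p(b)\<close> is L (or M, when \<open>b = S\<close>); here \<open>p > 1\<close> is needed, as \<open>\<phi>\<^sub>1(M) = S\<close>.
  So every iterate \<open>\<phi>\<^sub>p\<^sup>k(L)\<close> is admissible. The iterates form a prefix chain converging
  to \<open>u\<^sup>(\<^sup>p\<^sup>)\<close>, which therefore starts with L and has only admissible factors; this is the
  claim.\<close>

definition admissible_pair :: "letter \<Rightarrow> letter \<Rightarrow> bool" where
  "admissible_pair a b \<longleftrightarrow> (a, b) \<in> {(L, L), (L, S), (S, L), (S, M), (M, L)}"

lemma phi_word_Nil [simp]: "phi_word p [] = []"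
  by (simp add: phi_word_def)

lemma phi_word_Cons [simp]: "phi_word p (a # w) = phi p a @ phi_word p w"
  by (simp add: phi_word_def)

lemma phi_word_mono_prefix: "prefix v w \<Longrightarrow> prefix (phi_word p v) (phi_word p w)"
  by (auto simp: prefix_def phi_word_def)

lemma phi_nonempty: "phi p a \<noteq> []"
  by (cases a) auto

lemma successively_replicate_L_S: "successively admissible_pair (replicate n L @ [S])"
  by (induction n) (auto simp: successively_Cons admissible_pair_def hd_append)

lemma successively_phi: "successively admissible_pair (phi p a)"
  by (cases a) (auto simp: successively_replicate_L_S)

lemma admissible_pair_phi_junction:
  assumes "p > 1" "admissible_pair a b"
  shows "admissible_pair (last (phi p a)) (hd (phi p b))"
  using assms by (cases a; cases b) (auto simp: admissible_pair_def hd_append)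

lemma successively_phi_word:
  assumes "p > 1" "successively admissible_pair w"
  shows "successively admissible_pair (phi_word p w)"
  using assms(2)
proof (induction w rule: induct_list012)
  case (3 a b v)
  have "hd (phi_word p (b # v)) = hd (phi p b)"
    by (simp add: hd_append phi_nonempty)
  with 3 show ?case
    using admissible_pair_phi_junction[OF assms(1)]
    by (simp only: phi_word_Cons[of p a] successively_append_iff successively_phi) simp
qed (simp_all add: successively_phi)

definition phi_iter :: "nat \<Rightarrow> nat \<Rightarrow> letter list" where
  "phi_iter p k = (phi_word p ^^ k) [L]"

lemma phi_iter_0: "phi_iter p 0 = [L]"
  by (simp add: phi_iter_def)

lemma phi_iter_Suc: "phi_iter p (Suc k) = phi_word p (phi_iter p k)"
  by (simp add: phi_iter_def)

lemma prefix_phi_iter_Suc: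
  assumes "p > 0"
  shows "prefix (phi_iter p k) (phi_iter p (Suc k))"
proof (induction k)
  case 0
  from assms obtain q where "p = Suc q"
    using gr0_implies_Suc by blast
  then show ?case
    by (simp add: phi_iter_0 phi_iter_Suc)
next
  case (Suc k)
  then show ?case
    by (simp add: phi_iter_Suc[of p "Suc k"] phi_iter_Suc[of p k] phi_word_mono_prefix)
qed

lemma hd_phi_iter: "p > 0 \<Longrightarrow> hd (phi_iter p k) = L"
  using prefix_order.lift_Suc_mono_le[of "phi_iter p", OF prefix_phi_iter_Suc, of 0 k]
  by (auto simp: phi_iter_0 prefix_def)

lemma length_le_length_phi_word: "length w \<le> length (phi_word p w)"
proof (induction w)
  case (Cons a w)
  have "0 < length (phi p a)"
    by (simp add: phi_nonempty)
  then show ?case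
    using Cons.IH by (simp only: phi_word_Cons length_append list.size)
qed simp

lemma length_phi_iter:
  assumes "p > 0"
  shows "k < length (phi_iter p k)"
proof (induction k)
  case 0
  then show ?case by (simp add: phi_iter_0)
next
  case (Suc k)
  then obtain w where w: "phi_iter p k = L # w"
    using hd_phi_iter[OF assms, of k] by (cases "phi_iter p k") auto
  then show ?case
    using Suc.IH length_le_length_phi_word[of w p] assms by (simp add: phi_iter_Suc w)
qed

lemma limit_letter_prefix_chain:
  fixes ws :: "nat \<Rightarrow> 'a list"
  assumes chain: "\<And>k. prefix (ws k) (ws (Suc k))" and n: "n < length (ws k)"
  shows "(THE c. \<exists>K. \<forall>k'\<ge>K. n < length (ws k') \<and> ws k' ! n = c) = ws k ! n"
proof -
  have stable: "n < length (ws k') \<and> ws k' ! n = ws k ! n" if "k \<le> k'" for k'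
  proof -
    have "prefix (ws k) (ws k')"
      using prefix_order.lift_Suc_mono_le[of ws, OF chain that] .
    then obtain t where "ws k' = ws k @ t" by (auto simp: prefix_def)
    with n show ?thesis
      by (simp add: nth_append)
  qed
  show ?thesis
  proof (rule the_equality)
    fix c
    assume "\<exists>K. \<forall>k'\<ge>K. n < length (ws k') \<and> ws k' ! n = c"
    then obtain K where "\<forall>k'\<ge>K. n < length (ws k') \<and> ws k' ! n = c" ..
    then show "c = ws k ! n"
      using stable[of "max K k"] by simp
  qed (use stable in blast)
qed

lemma u_eq_phi_iter:
  assumes "p > 0" "n < length (phi_iter p k)"
  shows "u p n = phi_iter p k ! n"
  using limit_letter_prefix_chain[OF prefix_phi_iter_Suc[OF assms(1)] assms(2)]
  by (simp add: u_def phi_iter_def)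

lemma u_0: "p > 0 \<Longrightarrow> u p 0 = L"
  using u_eq_phi_iter[of p 0 0] by (simp add: phi_iter_0)

lemma successively_phi_iter:
  "p > 1 \<Longrightarrow> successively admissible_pair (phi_iter p k)"
  by (induction k) (simp_all add: phi_iter_0 phi_iter_Suc successively_phi_word)

lemma admissible_pair_u:
  assumes "p > 1"
  shows "admissible_pair (u p n) (u p (Suc n))"
proof -
  define w where "w = phi_iter p (Suc (Suc n))"
  have len: "Suc n < length w"
    using length_phi_iter[of p "Suc (Suc n)"] assms by (simp add: w_def)
  have "successively admissible_pair w"
    using successively_phi_iter[OF assms] by (simp add: w_def)
  from successively_nth[OF this len] show ?thesis
    using u_eq_phi_iter[of p n "Suc (Suc n)"] u_eq_phi_iter[of p "Suc n" "Suc (Suc n)"] len assms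
    by (simp add: w_def)
qed

theorem mainTheorem3:
  fixes p :: nat
  assumes "p > 1"
  shows "(\<forall>i. u p i = S \<longrightarrow>
            i > 0 \<and> u p (i - 1) = L \<and> (u p (i + 1) = L \<or> u p (i + 1) = M))
       \<and> (\<forall>i. u p i = M \<longrightarrow>
            i > 0 \<and> u p (i - 1) = S \<and> u p (i + 1) = L)"
proof -
  have neighbours: "i > 0 \<and> admissible_pair (u p (i - 1)) (u p i)
      \<and> admissible_pair (u p i) (u p (i + 1))" if "u p i \<noteq> L" for i
  proof -
    have "i > 0"
      using that u_0[of p] assms by (cases i) auto
    then show ?thesis
      using admissible_pair_u[OF assms, of "i - 1"] admissible_pair_u[OF assms, of i] by simp
  qed
  show ?thesis
  proof (intro conjI allI impI)
    fix i
    assume "u p i = S"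
    with neighbours[of i]
    show "i > 0" "u p (i - 1) = L" "u p (i + 1) = L \<or> u p (i + 1) = M"
      by (auto simp: admissible_pair_def)
  next
    fix i
    assume "u p i = M"
    with neighbours[of i]
    show "i > 0" "u p (i - 1) = S" "u p (i + 1) = L"
      by (auto simp: admissible_pair_def)
  qed
qed

end
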